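(* Let $H$ be a connected triangle-free graph and $G=L(H)$. Then $G$ is localizable if and only if $H$ is an equimatchable bipartite graph.
   Context: $L(H)$ is the line graph of $H$. A clique is strong if it intersects every maximal independent set; a graph is localizable if its vertex set admits a partition into strong cliques. A graph is equimatchable if all its maximal matchings have the same size. *)

theory Defs
  imports Main
begin

definition simple_graph :: "'a set \<Rightarrow> 'a set set \<Rightarrow> bool" where
  "simple_graph V E \<longleftrightarrow> finite V \<and>
     (\<forall>e\<in>E. \<exists>u v. u \<in> V \<and> v \<in> V \<and> u \<noteq> v \<and> e = {u, v})"

definition line_graph_edges :: "'a set set \<Rightarrow> 'a set set set" where
  "line_graph_edges E = {{e, f} | e f. e \<in> E \<and> f \<in> E \<and> e \<noteq> f \<and> e \<inter> f \<noteq> {}}"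

definition connected_graph :: "'a set \<Rightarrow> 'a set set \<Rightarrow> bool" where
  "connected_graph V E \<longleftrightarrow> V \<noteq> {} \<and>
     (\<forall>u\<in>V. \<forall>v\<in>V. (\<lambda>x y. {x, y} \<in> E)\<^sup>*\<^sup>* u v)"

definition triangle_free :: "'a set \<Rightarrow> 'a set set \<Rightarrow> bool" where
  "triangle_free V E \<longleftrightarrow>
     \<not> (\<exists>u\<in>V. \<exists>v\<in>V. \<exists>w\<in>V. {u, v} \<in> E \<and> {v, w} \<in> E \<and> {u, w} \<in> E)"

definition clique :: "'a set \<Rightarrow> 'a set set \<Rightarrow> 'a set \<Rightarrow> bool" where
  "clique V E C \<longleftrightarrow> C \<subseteq> V \<and> (\<forall>u\<in>C. \<forall>v\<in>C. u \<noteq> v \<longrightarrow> {u, v} \<in> E)"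

definition independent_set :: "'a set \<Rightarrow> 'a set set \<Rightarrow> 'a set \<Rightarrow> bool" where
  "independent_set V E S \<longleftrightarrow> S \<subseteq> V \<and> (\<forall>u\<in>S. \<forall>v\<in>S. {u, v} \<notin> E)"

definition maximal_independent_set :: "'a set \<Rightarrow> 'a set set \<Rightarrow> 'a set \<Rightarrow> bool" where
  "maximal_independent_set V E S \<longleftrightarrow> independent_set V E S \<and>
     (\<forall>T. independent_set V E T \<and> S \<subseteq> T \<longrightarrow> T = S)"

definition strong_clique :: "'a set \<Rightarrow> 'a set set \<Rightarrow> 'a set \<Rightarrow> bool" where
  "strong_clique V E C \<longleftrightarrow> clique V E C \<and>
     (\<forall>S. maximal_independent_set V E S \<longrightarrow> C \<inter> S \<noteq> {})"

definition localizable :: "'a set \<Rightarrow> 'a set set \<Rightarrow> bool" where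
  "localizable V E \<longleftrightarrow> (\<exists>P. \<Union>P = V \<and> {} \<notin> P \<and>
     (\<forall>A\<in>P. \<forall>B\<in>P. A \<noteq> B \<longrightarrow> A \<inter> B = {}) \<and>
     (\<forall>C\<in>P. strong_clique V E C))"

definition matching :: "'a set set \<Rightarrow> 'a set set \<Rightarrow> bool" where
  "matching E M \<longleftrightarrow> M \<subseteq> E \<and> (\<forall>e\<in>M. \<forall>f\<in>M. e \<noteq> f \<longrightarrow> e \<inter> f = {})"

definition maximal_matching :: "'a set set \<Rightarrow> 'a set set \<Rightarrow> bool" where
  "maximal_matching E M \<longleftrightarrow> matching E M \<and>
     (\<forall>M'. matching E M' \<and> M \<subseteq> M' \<longrightarrow> M' = M)"

definition equimatchable :: "'a set set \<Rightarrow> bool" where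
  "equimatchable E \<longleftrightarrow> (\<forall>M M'. maximal_matching E M \<and> maximal_matching E M'
     \<longrightarrow> card M = card M')"

definition bipartite :: "'a set \<Rightarrow> 'a set set \<Rightarrow> bool" where
  "bipartite V E \<longleftrightarrow> (\<exists>X Y. X \<union> Y = V \<and> X \<inter> Y = {} \<and>
     (\<forall>e\<in>E. \<exists>x\<in>X. \<exists>y\<in>Y. e = {x, y}))"

end

theory Submission
  imports Defs
begin

text \<open>For triangle-free \<open>H\<close>, a strong clique of \<open>L(H)\<close> is a clique of pairwise intersecting
  edges, hence all edges at one vertex, and it must be the whole star there, since any missed edge
  at that vertex extends to a maximal matching avoiding the clique. So a localization of \<open>L(H)\<close>
  is a partition of \<open>E(H)\<close> into stars at a vertex set \<open>Z\<close>: every edge has exactly one end in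
  \<open>Z\<close> (so \<open>H\<close> is bipartite), and every maximal matching meets every such star, i.e.\ is in
  bijection with \<open>Z\<close> (so \<open>H\<close> is equimatchable). Conversely, by K\<ouml>nig's theorem a bipartite
  \<open>H\<close> has a vertex cover \<open>C\<close> of size \<open>\<nu>(H)\<close>; if all maximal matchings have size \<open>|C|\<close>, each
  one saturates \<open>C\<close> and no edge has both ends in \<open>C\<close>, so the stars at \<open>C\<close> localize \<open>L(H)\<close>.\<close>

definition vertex_cover :: "'a set set \<Rightarrow> 'a set \<Rightarrow> bool" where
  "vertex_cover E C \<longleftrightarrow> (\<forall>e\<in>E. e \<inter> C \<noteq> {})"

definition bipartite_by :: "'a set \<Rightarrow> 'a set set \<Rightarrow> bool" where
  "bipartite_by X E \<longleftrightarrow> (\<forall>e\<in>E. \<exists>a b. e = {a, b} \<and> a \<in> X \<and> b \<notin> X)"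

definition star :: "'a set set \<Rightarrow> 'a \<Rightarrow> 'a set set" where
  "star E a = {e \<in> E. a \<in> e}"

lemma mem_star [simp]: "e \<in> star E a \<longleftrightarrow> e \<in> E \<and> a \<in> e"
  by (simp add: star_def)

lemma finite_star: "finite E \<Longrightarrow> finite (star E a)"
  by (simp add: star_def)

lemma simple_graph_edge:
  assumes "simple_graph V E" "e \<in> E"
  obtains a b where "e = {a, b}" "a \<in> V" "b \<in> V" "a \<noteq> b"
  using assms unfolding simple_graph_def by blast

lemma finite_edges_simple_graph:
  assumes "simple_graph V E"
  shows "finite E"
proof -
  have "E \<subseteq> Pow V"
  proof
    fix e assume "e \<in> E"
    then obtain a b where "e = {a, b}" "a \<in> V" "b \<in> V" by (rule simple_graph_edge[OF assms])
    then show "e \<in> Pow V" by simp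
  qed
  moreover have "finite V" using assms unfolding simple_graph_def by simp
  ultimately show ?thesis by (meson finite_Pow_iff finite_subset)
qed

lemma matching_mono: "matching E' M \<Longrightarrow> E' \<subseteq> E \<Longrightarrow> matching E M"
  unfolding matching_def by blast

lemma matching_subset_edges: "matching E M \<Longrightarrow> M \<subseteq> E"
  unfolding matching_def by blast

lemma matching_disjoint: "matching E M \<Longrightarrow> e \<in> M \<Longrightarrow> f \<in> M \<Longrightarrow> e \<noteq> f \<Longrightarrow> e \<inter> f = {}"
  unfolding matching_def by blast

lemma finite_matching: "finite E \<Longrightarrow> matching E M \<Longrightarrow> finite M"
  unfolding matching_def using finite_subset by blast

lemma matching_insert:
  "matching E M \<Longrightarrow> e \<in> E \<Longrightarrow> e \<inter> \<Union>M = {} \<Longrightarrow> matching E (insert e M)"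
  unfolding matching_def by blast

lemma card_insert_matching:
  assumes "finite M" "e \<noteq> {}" "e \<inter> \<Union>M = {}"
  shows "card (insert e M) = card M + 1"
proof -
  have "e \<notin> M" using assms(2,3) by blast
  then show ?thesis using assms(1) by simp
qed

lemma card_matching_le_card_cover:
  assumes "matching E M" "vertex_cover M C" "finite C"
  shows "card M \<le> card C"
proof -
  define pick where "pick e = (SOME y. y \<in> e \<inter> C)" for e
  have pick: "pick e \<in> e \<inter> C" if "e \<in> M" for e
  proof -
    have "\<exists>y. y \<in> e \<inter> C" using assms(2) that unfolding vertex_cover_def by blast
    then show ?thesis unfolding pick_def by (rule someI_ex)
  qed
  have "inj_on pick M"
  proof (rule inj_onI)
    fix e f assume e: "e \<in> M" and f: "f \<in> M" and "pick e = pick f"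
    then have "pick e \<in> e \<inter> f" using pick[OF e] pick[OF f] by simp
    then show "e = f" using matching_disjoint[OF assms(1) e f] by blast
  qed
  moreover have "pick ` M \<subseteq> C" using pick by auto
  ultimately show ?thesis using assms(3) by (rule card_inj_on_le)
qed

lemma cover_subset_Union_matching:
  assumes "matching E M" "vertex_cover M C" "finite C" "card C \<le> card M"
  shows "C \<subseteq> \<Union>M"
proof -
  have "vertex_cover M (C \<inter> \<Union>M)" using assms(2) unfolding vertex_cover_def by blast
  then have "card M \<le> card (C \<inter> \<Union>M)"
    using card_matching_le_card_cover[OF assms(1)] assms(3) by simp
  then have "card C \<le> card (C \<inter> \<Union>M)" using assms(4) by linarith
  then have "C \<inter> \<Union>M = C" using assms(3) card_seteq[of C "C \<inter> \<Union>M"] by blast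
  then show ?thesis by blast
qed

lemma ex_maximum_matching:
  assumes "finite E"
  obtains M where "matching E M" "\<And>N. matching E N \<Longrightarrow> card N \<le> card M"
proof -
  have "card N < Suc (card E)" if "matching E N" for N
    using card_mono[OF assms matching_subset_edges[OF that]] by simp
  moreover have "matching E {}" unfolding matching_def by simp
  ultimately obtain M where "matching E M" "\<And>N. matching E N \<Longrightarrow> card N \<le> card M"
    using ex_has_greatest_nat[of "matching E" "{}" card "Suc (card E)"] by blast
  then show ?thesis using that by blast
qed

lemma ex_maximal_matching_superset:
  assumes "finite E" "matching E M"
  obtains M' where "maximal_matching E M'" "M \<subseteq> M'"
proof -
  have "card N < Suc (card E)" if "matching E N \<and> M \<subseteq> N" for N
    using card_mono[OF assms(1) matching_subset_edges[of E N]] that by simp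
  then obtain M' where M': "matching E M'" "M \<subseteq> M'"
    and greatest: "\<And>N. matching E N \<and> M \<subseteq> N \<Longrightarrow> card N \<le> card M'"
    using ex_has_greatest_nat[of "\<lambda>N. matching E N \<and> M \<subseteq> N" M card "Suc (card E)"] assms(2)
    by blast
  have "N = M'" if N: "matching E N" "M' \<subseteq> N" for N
  proof -
    have "card N \<le> card M'" using greatest N M'(2) by blast
    then show ?thesis using card_seteq[OF finite_matching[OF assms(1) N(1)] N(2)] by simp
  qed
  then have "maximal_matching E M'" using M'(1) unfolding maximal_matching_def by blast
  then show ?thesis using that M'(2) by blast
qed

definition has_cover_le_matching :: "'a set set \<Rightarrow> bool" where
  "has_cover_le_matching E \<longleftrightarrow>
     (\<exists>M C. matching E M \<and> vertex_cover E C \<and> finite C \<and> card C \<le> card M)"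

lemma has_cover_le_matchingI:
  "matching E M \<Longrightarrow> vertex_cover E C \<Longrightarrow> finite C \<Longrightarrow> card C \<le> card M \<Longrightarrow>
    has_cover_le_matching E"
  unfolding has_cover_le_matching_def by blast

lemma has_cover_le_matching_empty: "has_cover_le_matching {}"
  by (rule has_cover_le_matchingI[of _ "{}" "{}"]) (auto simp: matching_def vertex_cover_def)

lemma has_cover_le_matching_insert_vertex:
  assumes "matching {e \<in> E. v \<notin> e} M'" "vertex_cover {e \<in> E. v \<notin> e} C'" "finite C'"
    and "card C' \<le> card M'" "matching E M" "card M' < card M"
  shows "has_cover_le_matching E"
proof (rule has_cover_le_matchingI)
  show "vertex_cover E (insert v C')" using assms(2) unfolding vertex_cover_def by blast
  show "card (insert v C') \<le> card M" using assms(3,4,6) by (simp add: card_insert_if)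
qed (use assms in auto)

lemma has_cover_le_matching_leaf:
  assumes "finite E" "{u, v} \<in> E" "u \<noteq> v" "star E u = {{u, v}}"
    and "has_cover_le_matching {e \<in> E. v \<notin> e}"
  shows "has_cover_le_matching E"
proof -
  obtain M' C' where MC': "matching {e \<in> E. v \<notin> e} M'" "vertex_cover {e \<in> E. v \<notin> e} C'"
      "finite C'" "card C' \<le> card M'"
    using assms(5) unfolding has_cover_le_matching_def by blast
  have free: "{u, v} \<inter> \<Union>M' = {}"
  proof -
    have "u \<notin> e \<and> v \<notin> e" if "e \<in> M'" for e
    proof -
      have e: "e \<in> E" "v \<notin> e" using that matching_subset_edges[OF MC'(1)] by auto
      then have "e \<notin> star E u" unfolding assms(4) by auto
      then show ?thesis using e by simp
    qed
    then show ?thesis by blast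
  qed
  have "finite M'" using finite_matching[OF _ MC'(1)] assms(1) by simp
  then have "card (insert {u, v} M') = card M' + 1" using card_insert_matching[OF _ _ free] by simp
  moreover have "matching E (insert {u, v} M')"
    using matching_insert[OF matching_mono[OF MC'(1)] assms(2) free] by blast
  ultimately show ?thesis using has_cover_le_matching_insert_vertex[OF MC'] by simp
qed

text \<open>Rizzi's argument: a cover of \<open>E - {f}\<close> no larger than a maximum matching of \<open>E\<close> lies on
  that matching, so it avoids the exposed vertex \<open>v\<close>, hence contains \<open>u\<close> and covers \<open>f\<close> too.\<close>

lemma has_cover_le_matching_maximum_matching_exposes:
  assumes "{u, v} \<in> E" "matching E M" "\<And>N. matching E N \<Longrightarrow> card N \<le> card M" "v \<notin> \<Union>M"
    and "u \<in> f" "f \<notin> M" "f \<noteq> {u, v}" "has_cover_le_matching (E - {f})"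
  shows "has_cover_le_matching E"
proof -
  obtain M2 C2 where MC2: "matching (E - {f}) M2" "vertex_cover (E - {f}) C2" "finite C2"
      "card C2 \<le> card M2"
    using assms(8) unfolding has_cover_le_matching_def by blast
  have M2: "matching E M2" using matching_mono[OF MC2(1)] by blast
  have "M \<subseteq> E - {f}" using matching_subset_edges[OF assms(2)] assms(6) by blast
  then have "vertex_cover M C2" using MC2(2) unfolding vertex_cover_def by blast
  moreover have "card C2 \<le> card M" using MC2(4) assms(3)[OF M2] by linarith
  ultimately have "C2 \<subseteq> \<Union>M" using cover_subset_Union_matching[OF assms(2) _ MC2(3)] by blast
  then have "v \<notin> C2" using assms(4) by blast
  moreover have "{u, v} \<inter> C2 \<noteq> {}" using MC2(2) assms(1,7) unfolding vertex_cover_def by blast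
  ultimately have "u \<in> C2" by blast
  then have "vertex_cover E C2" using MC2(2) assms(5) unfolding vertex_cover_def by blast
  then show ?thesis using has_cover_le_matchingI[OF M2 _ MC2(3,4)] by blast
qed

lemma has_cover_le_matching_high_degree:
  assumes "finite E" "{u, v} \<in> E" "u \<noteq> v" "3 \<le> card (star E u)"
    and "has_cover_le_matching {e \<in> E. v \<notin> e}"
    and "\<And>f. f \<in> E \<Longrightarrow> has_cover_le_matching (E - {f})"
  shows "has_cover_le_matching E"
proof -
  obtain M where M: "matching E M" "\<And>N. matching E N \<Longrightarrow> card N \<le> card M"
    using ex_maximum_matching[OF assms(1)] by blast
  obtain M1 C1 where MC1: "matching {e \<in> E. v \<notin> e} M1" "vertex_cover {e \<in> E. v \<notin> e} C1"
      "finite C1" "card C1 \<le> card M1"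
    using assms(5) unfolding has_cover_le_matching_def by blast
  have M1: "matching E M1" using matching_mono[OF MC1(1)] by blast
  show ?thesis
  proof (cases "card M1 < card M")
    case True
    then show ?thesis by (rule has_cover_le_matching_insert_vertex[OF MC1 M(1)])
  next
    case False
    then have M1_maximum: "card N \<le> card M1" if "matching E N" for N using M(2)[OF that] by linarith
    have v_exposed: "v \<notin> \<Union>M1" using matching_subset_edges[OF MC1(1)] by blast
    have "u \<in> \<Union>M1"
    proof (rule ccontr)
      assume "u \<notin> \<Union>M1"
      then have free: "{u, v} \<inter> \<Union>M1 = {}" using v_exposed by blast
      have "card (insert {u, v} M1) = card M1 + 1"
        using card_insert_matching[OF finite_matching[OF assms(1) M1] _ free] by simp
      then show False using M1_maximum[OF matching_insert[OF M1 assms(2) free]] by simp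
    qed
    then obtain g where g: "g \<in> M1" "u \<in> g" by blast
    have "card (star E u) - card {{u, v}, g} \<le> card (star E u - {{u, v}, g})"
      by (rule diff_card_le_card_Diff) simp
    moreover have "card {{u, v}, g} \<le> 2" by (simp add: card_insert_if)
    ultimately have "card (star E u - {{u, v}, g}) \<noteq> 0" using assms(4) by linarith
    then obtain f where "f \<in> star E u - {{u, v}, g}" by (metis card.empty ex_in_conv)
    then have f: "f \<in> E" "u \<in> f" "f \<noteq> {u, v}" "f \<noteq> g" by auto
    have "f \<notin> M1"
    proof
      assume "f \<in> M1"
      then have "g \<inter> f = {}" using matching_disjoint[OF M1 g(1)] f(4) by metis
      then show False using f(2) g(2) by blast
    qed
    then show ?thesis
      using has_cover_le_matching_maximum_matching_exposes[OF assms(2) M1 M1_maximum v_exposed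
          f(2) _ f(3) assms(6)[OF f(1)]] by blast
  qed
qed

definition identify_vertices :: "'a \<Rightarrow> 'a \<Rightarrow> 'a set set \<Rightarrow> 'a set set" where
  "identify_vertices x v E = image (id(x := v)) ` E"

context
  fixes E :: "'a set set" and u v x :: 'a
  assumes finite_edges: "finite E"
    and star_u: "star E u = {{u, v}, {u, x}}"
    and no_edge_vx: "\<And>e. e \<in> E \<Longrightarrow> v \<in> e \<Longrightarrow> x \<notin> e"
begin

lemma matching_lift_identify_vertices:
  assumes M': "matching (identify_vertices x v {e \<in> E. u \<notin> e}) M'"
  obtains M where "matching E M" "card M = card M' + 1"
proof -
  let ?\<rho> = "id(x := v)" and ?E0 = "{e \<in> E. u \<notin> e}"
  define pre where "pre = inv_into ?E0 (image ?\<rho>)"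
  have M'_sub: "M' \<subseteq> image ?\<rho> ` ?E0"
    using matching_subset_edges[OF M'] unfolding identify_vertices_def .
  have pre: "pre e' \<in> ?E0" "?\<rho> ` pre e' = e'" if "e' \<in> M'" for e'
  proof -
    have "e' \<in> image ?\<rho> ` ?E0" using that M'_sub by blast
    then show "pre e' \<in> ?E0" "?\<rho> ` pre e' = e'" unfolding pre_def
      by (rule inv_into_into, rule f_inv_into_f)
  qed
  define M0 where "M0 = pre ` M'"
  have "inj_on pre M'" unfolding pre_def using M'_sub by (rule inj_on_inv_into)
  then have card_M0: "card M0 = card M'" unfolding M0_def by (rule card_image)
  have images_disjoint: "?\<rho> ` g \<inter> ?\<rho> ` h = {}"
    if gh: "g \<in> M0" "h \<in> M0" "g \<noteq> h" for g h
  proof -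
    obtain g' h' where "g' \<in> M'" "h' \<in> M'" "g = pre g'" "h = pre h'"
      using gh(1,2) unfolding M0_def by blast
    moreover have "g' \<noteq> h'" using calculation gh(3) by blast
    ultimately show ?thesis using matching_disjoint[OF M'] pre(2) by metis
  qed
  have M0: "matching E M0" unfolding matching_def
  proof (intro conjI ballI impI)
    show "M0 \<subseteq> E" using pre(1) unfolding M0_def by blast
    show "g \<inter> h = {}" if "g \<in> M0" "h \<in> M0" "g \<noteq> h" for g h
      using images_disjoint[OF that] by blast
  qed
  have u_exposed: "u \<notin> \<Union>M0" using pre(1) unfolding M0_def by blast
  \<comment> \<open>\<open>v\<close> and \<open>x\<close> have the same image, so at most one of them is matched by \<open>M0\<close>\<close>
  have "v \<notin> \<Union>M0 \<or> x \<notin> \<Union>M0"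
  proof (rule ccontr)
    assume "\<not> ?thesis"
    then obtain g h where gh: "g \<in> M0" "v \<in> g" "h \<in> M0" "x \<in> h" by blast
    then have "v \<in> ?\<rho> ` g \<inter> ?\<rho> ` h" by force
    then have "g = h" using images_disjoint[OF gh(1,3)] by blast
    then show False using gh no_edge_vx matching_subset_edges[OF M0] by blast
  qed
  then obtain w where w: "w \<in> {v, x}" "w \<notin> \<Union>M0" by blast
  have "{u, w} \<in> E" using w(1) star_u by (auto simp: set_eq_iff)
  moreover have free: "{u, w} \<inter> \<Union>M0 = {}" using u_exposed w(2) by blast
  ultimately have "matching E (insert {u, w} M0)" using matching_insert[OF M0] by blast
  moreover have "card (insert {u, w} M0) = card M' + 1"
    using card_insert_matching[OF finite_matching[OF finite_edges M0] _ free] card_M0 by simp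
  ultimately show ?thesis using that by blast
qed

lemma vertex_cover_lift_identify_vertices:
  assumes C': "vertex_cover (identify_vertices x v {e \<in> E. u \<notin> e}) C'"
  shows "vertex_cover E (if v \<in> C' then insert x C' else insert u C')"
  unfolding vertex_cover_def
proof
  fix e assume e: "e \<in> E"
  show "e \<inter> (if v \<in> C' then insert x C' else insert u C') \<noteq> {}"
  proof (cases "u \<in> e")
    case True
    then have "e = {u, v} \<or> e = {u, x}" using e star_u by (auto simp: set_eq_iff)
    then show ?thesis by auto
  next
    case False
    then have "id(x := v) ` e \<in> identify_vertices x v {e \<in> E. u \<notin> e}"
      using e unfolding identify_vertices_def by blast
    then obtain y where "y \<in> e" "(id(x := v)) y \<in> C'" using C' unfolding vertex_cover_def by blast
    then show ?thesis by (cases "y = x") auto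
  qed
qed

lemma has_cover_le_matching_degree_two:
  assumes "has_cover_le_matching (identify_vertices x v {e \<in> E. u \<notin> e})"
  shows "has_cover_le_matching E"
proof -
  obtain M' C' where MC': "matching (identify_vertices x v {e \<in> E. u \<notin> e}) M'"
      "vertex_cover (identify_vertices x v {e \<in> E. u \<notin> e}) C'" "finite C'" "card C' \<le> card M'"
    using assms unfolding has_cover_le_matching_def by blast
  obtain M where M: "matching E M" "card M = card M' + 1"
    using matching_lift_identify_vertices[OF MC'(1)] .
  let ?C = "if v \<in> C' then insert x C' else insert u C'"
  have "card ?C \<le> card C' + 1" using MC'(3) by (simp add: card_insert_if)
  then have "card ?C \<le> card M" using M(2) MC'(4) by linarith
  then show ?thesis
    using has_cover_le_matchingI[OF M(1) vertex_cover_lift_identify_vertices[OF MC'(2)]] MC'(3)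
    by simp
qed

end

lemma bipartite_byE:
  assumes "bipartite_by X E" "e \<in> E"
  obtains a b where "e = {a, b}" "a \<in> X" "b \<notin> X"
  using assms unfolding bipartite_by_def by blast

lemma bipartite_by_subset: "bipartite_by X E \<Longrightarrow> E' \<subseteq> E \<Longrightarrow> bipartite_by X E'"
  unfolding bipartite_by_def by blast

lemma bipartite_by_edge_iff:
  assumes "bipartite_by X E" "{a, b} \<in> E"
  shows "a \<in> X \<longleftrightarrow> b \<notin> X"
proof -
  obtain c d where "{a, b} = {c, d}" "c \<in> X" "d \<notin> X"
    by (rule bipartite_byE[OF assms])
  then show ?thesis by (auto simp: doubleton_eq_iff)
qed

lemma bipartite_by_identify_vertices:
  assumes "bipartite_by X E" "x \<in> X \<longleftrightarrow> v \<in> X"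
  shows "bipartite_by X (identify_vertices x v E)"
  unfolding bipartite_by_def identify_vertices_def
proof
  fix e' assume "e' \<in> image (id(x := v)) ` E"
  then obtain e where "e \<in> E" "e' = (id(x := v)) ` e" by blast
  moreover obtain a b where "e = {a, b}" "a \<in> X" "b \<notin> X"
    using bipartite_byE[OF assms(1) \<open>e \<in> E\<close>] by blast
  moreover have "(id(x := v)) y \<in> X \<longleftrightarrow> y \<in> X" for y using assms(2) by simp
  ultimately have "e' = {(id(x := v)) a, (id(x := v)) b}" "(id(x := v)) a \<in> X"
    "(id(x := v)) b \<notin> X" by simp_all
  then show "\<exists>a b. e' = {a, b} \<and> a \<in> X \<and> b \<notin> X" by blast
qed

lemma bipartite_by_unique:
  assumes "bipartite_by Z E" "e \<in> E" "z \<in> e \<inter> Z" "z' \<in> e \<inter> Z"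
  shows "z = z'"
proof -
  obtain a b where "e = {a, b}" "a \<in> Z" "b \<notin> Z" by (rule bipartite_byE[OF assms(1,2)])
  then show ?thesis using assms(3,4) by blast
qed

lemma bipartite_iff_bipartite_by:
  assumes "simple_graph V E"
  shows "bipartite V E \<longleftrightarrow> (\<exists>Z. bipartite_by Z E)"
proof
  assume "bipartite V E"
  then obtain X Y where XY: "X \<inter> Y = {}" "\<forall>e\<in>E. \<exists>x\<in>X. \<exists>y\<in>Y. e = {x, y}"
    unfolding bipartite_def by blast
  have "bipartite_by X E" unfolding bipartite_by_def
  proof
    fix e assume "e \<in> E"
    then obtain x y where "x \<in> X" "y \<in> Y" "e = {x, y}" using XY(2) by blast
    moreover have "y \<notin> X" using XY(1) \<open>y \<in> Y\<close> by blast
    ultimately show "\<exists>a b. e = {a, b} \<and> a \<in> X \<and> b \<notin> X" by blast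
  qed
  then show "\<exists>Z. bipartite_by Z E" ..
next
  assume "\<exists>Z. bipartite_by Z E"
  then obtain Z where Z: "bipartite_by Z E" ..
  have "\<exists>x\<in>V \<inter> Z. \<exists>y\<in>V - Z. e = {x, y}" if e: "e \<in> E" for e
  proof -
    obtain a b where "e = {a, b}" "a \<in> Z" "b \<notin> Z" by (rule bipartite_byE[OF Z e])
    moreover obtain p q where "e = {p, q}" "p \<in> V" "q \<in> V"
      by (rule simple_graph_edge[OF assms e])
    ultimately have "a \<in> V" "b \<in> V" by (auto simp: doubleton_eq_iff)
    then show ?thesis using \<open>e = {a, b}\<close> \<open>a \<in> Z\<close> \<open>b \<notin> Z\<close> by blast
  qed
  then show "bipartite V E" unfolding bipartite_def
    by (intro exI[of _ "V \<inter> Z"] exI[of _ "V - Z"]) blast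
qed

lemma bipartite_by_outside_unique:
  assumes "bipartite_by X E" "e \<in> E" "v \<in> e" "x \<in> e" "v \<notin> X" "x \<notin> X"
  shows "v = x"
proof -
  obtain a b where "e = {a, b}" "a \<in> X" "b \<notin> X" by (rule bipartite_byE[OF assms(1,2)])
  then show ?thesis using assms(3-6) by blast
qed

lemma bipartite_by_star_card_two:
  assumes "bipartite_by X E" "{u, v} \<in> E" "u \<in> X" "card (star E u) = 2"
  obtains x where "star E u = {{u, v}, {u, x}}" "x \<notin> X"
proof -
  have uv: "{u, v} \<in> star E u" using assms(2) by simp
  then have "card (star E u - {{u, v}}) = 1" using assms(4) by simp
  then obtain f where f: "star E u - {{u, v}} = {f}" by (auto simp: card_1_singleton_iff)
  then have "f \<in> star E u - {{u, v}}" by simp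
  then have "f \<in> E" "u \<in> f" by simp_all
  obtain a b where "f = {a, b}" using bipartite_byE[OF assms(1) \<open>f \<in> E\<close>] by blast
  then have "\<exists>x. f = {u, x}" using \<open>u \<in> f\<close> by (auto simp: insert_commute)
  then obtain x where x: "f = {u, x}" ..
  have "star E u = insert {u, v} (star E u - {{u, v}})" using uv by (rule insert_Diff[symmetric])
  then have "star E u = {{u, v}, {u, x}}" unfolding f x .
  moreover have "x \<notin> X" using bipartite_by_edge_iff[OF assms(1)] \<open>f \<in> E\<close> assms(3) unfolding x by simp
  ultimately show ?thesis using that by blast
qed

text \<open>The induction picks an edge \<open>{u, v}\<close> and distinguishes the degree of \<open>u\<close>; only the
  contraction of a vertex of degree two needs bipartiteness, to keep the merged neighbours of \<open>u\<close>
  non-adjacent.\<close>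

theorem koenig:
  assumes "finite E" "bipartite_by X E"
  shows "has_cover_le_matching E"
  using assms
proof (induction "card E" arbitrary: E rule: less_induct)
  case less
  have IH_subset: "has_cover_le_matching E'" if "E' \<subset> E" for E'
  proof (rule less.hyps[OF psubset_card_mono[OF less.prems(1) that]])
    show "finite E'" using less.prems(1) that by (auto intro: finite_subset)
    show "bipartite_by X E'" using bipartite_by_subset less.prems(2) that by blast
  qed
  show ?case
  proof (cases "E = {}")
    case True
    then show ?thesis using has_cover_le_matching_empty by simp
  next
    case False
    then obtain e where "e \<in> E" by blast
    then obtain u v where "e = {u, v}" "u \<in> X" "v \<notin> X"
      by (rule bipartite_byE[OF less.prems(2)])
    then have uv: "{u, v} \<in> E" "u \<in> X" "v \<notin> X" using \<open>e \<in> E\<close> by simp_all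
    then have "u \<noteq> v" by blast
    have E_v: "has_cover_le_matching {e \<in> E. v \<notin> e}"
      using uv(1) by (intro IH_subset) auto
    have uv_star: "{u, v} \<in> star E u" using uv(1) by simp
    then have "card (star E u) \<noteq> 0" using finite_star[OF less.prems(1)] by auto
    then consider "card (star E u) = 1" | "card (star E u) = 2" | "3 \<le> card (star E u)"
      by linarith
    then show ?thesis
    proof cases
      case 1
      then have "star E u = {{u, v}}" using uv_star by (metis card_1_singletonE singletonD)
      then show ?thesis
        using has_cover_le_matching_leaf[OF less.prems(1) uv(1) \<open>u \<noteq> v\<close> _ E_v] by blast
    next
      case 2
      then obtain x where star: "star E u = {{u, v}, {u, x}}" and "x \<notin> X"
        using bipartite_by_star_card_two[OF less.prems(2) uv(1,2)] by blast
      have "v \<noteq> x"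
      proof
        assume "v = x"
        then have "card (star E u) = 1" using star by simp
        then show False using 2 by simp
      qed
      have no_edge_vx: "x \<notin> e" if "e \<in> E" "v \<in> e" for e
        using bipartite_by_outside_unique[OF less.prems(2) that _ uv(3) \<open>x \<notin> X\<close>] \<open>v \<noteq> x\<close>
        by blast
      let ?E' = "identify_vertices x v {e \<in> E. u \<notin> e}"
      have "card ?E' \<le> card {e \<in> E. u \<notin> e}"
        unfolding identify_vertices_def using less.prems(1) by (simp add: card_image_le)
      also have "\<dots> < card E"
        using uv(1) less.prems(1) by (intro psubset_card_mono) auto
      finally have "card ?E' < card E" .
      moreover have "finite ?E'" unfolding identify_vertices_def using less.prems(1) by simp
      moreover have "bipartite_by X ?E'"
        by (rule bipartite_by_identify_vertices[OF bipartite_by_subset[OF less.prems(2)]])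
          (use \<open>x \<notin> X\<close> uv(3) in auto)
      ultimately have "has_cover_le_matching ?E'" by (rule less.hyps)
      then show ?thesis
        using has_cover_le_matching_degree_two[OF less.prems(1) star] no_edge_vx by blast
    next
      case 3
      have "has_cover_le_matching (E - {f})" if "f \<in> E" for f
        using that by (intro IH_subset) blast
      with 3 show ?thesis
        by (rule has_cover_le_matching_high_degree[OF less.prems(1) uv(1) \<open>u \<noteq> v\<close> _ E_v])
    qed
  qed
qed

definition tight_cover :: "'a set set \<Rightarrow> 'a set \<Rightarrow> bool" where
  "tight_cover E C \<longleftrightarrow> vertex_cover E C \<and> finite C \<and>
     (\<forall>M. maximal_matching E M \<longrightarrow> card M = card C)"

lemma tight_cover_if_equimatchable:
  assumes "finite E" "equimatchable E" "matching E M0" "vertex_cover E C" "finite C"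
    and "card C \<le> card M0"
  shows "tight_cover E C"
proof -
  obtain M1 where M1: "maximal_matching E M1" "M0 \<subseteq> M1"
    using ex_maximal_matching_superset[OF assms(1,3)] .
  have "matching E M1" using M1(1) unfolding maximal_matching_def by blast
  then have "card M1 \<le> card C"
    using card_matching_le_card_cover assms(4,5) matching_subset_edges
    unfolding vertex_cover_def by (metis subsetD)
  moreover have "card M0 \<le> card M1"
    using card_mono[OF finite_matching[OF assms(1) \<open>matching E M1\<close>] M1(2)] .
  moreover have "card M = card M1" if "maximal_matching E M" for M
    using assms(2) that M1(1) unfolding equimatchable_def by blast
  ultimately show ?thesis using assms(4-6) unfolding tight_cover_def by fastforce
qed

text \<open>Each of the next two facts holds because otherwise some maximal matching would be covered by
  fewer than \<open>card C\<close> vertices.\<close>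

lemma tight_cover_not_both_ends:
  assumes "finite E" "tight_cover E C" "{a, b} \<in> E" "a \<noteq> b"
  shows "\<not> {a, b} \<subseteq> C"
proof
  assume ab: "{a, b} \<subseteq> C"
  have C: "vertex_cover E C" "finite C" "\<And>M. maximal_matching E M \<Longrightarrow> card M = card C"
    using assms(2) unfolding tight_cover_def by blast+
  have "matching E {{a, b}}" using assms(3) unfolding matching_def by blast
  then obtain N where N: "maximal_matching E N" "{a, b} \<in> N"
    using ex_maximal_matching_superset[OF assms(1)] by blast
  have "matching E N" using N(1) unfolding maximal_matching_def by blast
  then have N': "matching E (N - {{a, b}})" unfolding matching_def by blast
  have "vertex_cover (N - {{a, b}}) (C - {a, b})"
    unfolding vertex_cover_def
  proof
    fix f assume f: "f \<in> N - {{a, b}}"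
    then have "f \<inter> {a, b} = {}" using matching_disjoint[OF \<open>matching E N\<close>] N(2) by blast
    moreover have "f \<inter> C \<noteq> {}"
      using C(1) f matching_subset_edges[OF \<open>matching E N\<close>] unfolding vertex_cover_def by blast
    ultimately show "f \<inter> (C - {a, b}) \<noteq> {}" by blast
  qed
  then have "card (N - {{a, b}}) \<le> card (C - {a, b})"
    using card_matching_le_card_cover[OF N'] C(2) by blast
  moreover have "card (N - {{a, b}}) = card N - 1" using N(2) by simp
  moreover have "card (C - {a, b}) = card C - 2" using ab assms(4) C(2) by (simp add: card_Diff_subset)
  moreover have "card N \<ge> 1"
    using N(2) finite_matching[OF assms(1) \<open>matching E N\<close>] card_0_eq by fastforce
  moreover have "card C \<ge> 2" using card_mono[OF C(2) ab] assms(4) by simp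
  ultimately show False using C(3)[OF N(1)] by linarith
qed

lemma tight_cover_star_meets_maximal_matching:
  assumes "tight_cover E C" "c \<in> C" "maximal_matching E M"
  shows "star E c \<inter> M \<noteq> {}"
proof
  assume missed: "star E c \<inter> M = {}"
  have C: "vertex_cover E C" "finite C" "card M = card C"
    using assms(1,3) unfolding tight_cover_def by blast+
  have "matching E M" using assms(3) unfolding maximal_matching_def by blast
  moreover have "vertex_cover M (C - {c})" unfolding vertex_cover_def
  proof
    fix f assume "f \<in> M"
    then have "f \<in> E" using matching_subset_edges[OF \<open>matching E M\<close>] by blast
    then have "c \<notin> f" using missed \<open>f \<in> M\<close> by auto
    moreover have "f \<inter> C \<noteq> {}" using C(1) \<open>f \<in> E\<close> unfolding vertex_cover_def by blast
    ultimately show "f \<inter> (C - {c}) \<noteq> {}" by blast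
  qed
  ultimately have "card M \<le> card (C - {c})"
    using card_matching_le_card_cover C(2) by (metis finite_Diff)
  moreover have "card (C - {c}) < card C" using card_Diff1_less[OF C(2) assms(2)] .
  ultimately show False using C(3) by linarith
qed

lemma strong_stars_if_equimatchable:
  assumes "finite E" "bipartite_by X E" "equimatchable E"
  obtains C where "bipartite_by C E"
    "\<And>c M. c \<in> C \<Longrightarrow> maximal_matching E M \<Longrightarrow> star E c \<inter> M \<noteq> {}"
proof -
  obtain M0 C where "matching E M0" "vertex_cover E C" "finite C" "card C \<le> card M0"
    using koenig[OF assms(1,2)] unfolding has_cover_le_matching_def by blast
  then have C: "tight_cover E C" by (rule tight_cover_if_equimatchable[OF assms(1,3)])
  have "bipartite_by C E" unfolding bipartite_by_def
  proof
    fix e assume "e \<in> E"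
    then obtain a b where e: "e = {a, b}" "a \<in> X" "b \<notin> X" by (rule bipartite_byE[OF assms(2)])
    then have "a \<noteq> b" by blast
    have "e \<inter> C \<noteq> {}" using C \<open>e \<in> E\<close> unfolding tight_cover_def vertex_cover_def by blast
    then have "a \<in> C \<or> b \<in> C" using e(1) by blast
    moreover have "\<not> (a \<in> C \<and> b \<in> C)"
      using tight_cover_not_both_ends[OF assms(1) C _ \<open>a \<noteq> b\<close>] \<open>e \<in> E\<close> e(1) by simp
    ultimately consider "a \<in> C" "b \<notin> C" | "b \<in> C" "a \<notin> C" by blast
    then show "\<exists>c d. e = {c, d} \<and> c \<in> C \<and> d \<notin> C"
    proof cases
      case 1
      then show ?thesis using e(1) by blast
    next
      case 2
      then show ?thesis using e(1) insert_commute by blast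
    qed
  qed
  then show ?thesis using that tight_cover_star_meets_maximal_matching[OF C] by blast
qed

lemma line_graph_edge_iff:
  "{a, b} \<in> line_graph_edges E \<longleftrightarrow> a \<in> E \<and> b \<in> E \<and> a \<noteq> b \<and> a \<inter> b \<noteq> {}"
  unfolding line_graph_edges_def by (auto simp: doubleton_eq_iff)

lemma independent_set_line_graph_iff:
  "independent_set E (line_graph_edges E) S \<longleftrightarrow> matching E S"
  unfolding independent_set_def matching_def line_graph_edge_iff by blast

lemma maximal_independent_set_line_graph_iff:
  "maximal_independent_set E (line_graph_edges E) S \<longleftrightarrow> maximal_matching E S"
  unfolding maximal_independent_set_def maximal_matching_def independent_set_line_graph_iff ..

lemma strong_clique_line_graph_iff:
  "strong_clique E (line_graph_edges E) C \<longleftrightarrow>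
     C \<subseteq> E \<and> (\<forall>a\<in>C. \<forall>b\<in>C. a \<noteq> b \<longrightarrow> a \<inter> b \<noteq> {}) \<and>
     (\<forall>M. maximal_matching E M \<longrightarrow> C \<inter> M \<noteq> {})"
  unfolding strong_clique_def clique_def line_graph_edge_iff maximal_independent_set_line_graph_iff
  by blast

lemma strong_clique_line_graph_star:
  assumes "finite E" "strong_clique E (line_graph_edges E) C" "C \<subseteq> star E a"
  shows "C = star E a"
proof -
  have "h \<in> C" if h: "h \<in> star E a" for h
  proof (rule ccontr)
    assume "h \<notin> C"
    have "matching E {h}" using h unfolding matching_def by simp
    then obtain M where M: "maximal_matching E M" "h \<in> M"
      using ex_maximal_matching_superset[OF assms(1)] by blast
    then obtain g where "g \<in> C" "g \<in> M" using assms(2) unfolding strong_clique_line_graph_iff by blast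
    then have "a \<in> g \<inter> h" "g \<noteq> h" using assms(3) h \<open>h \<notin> C\<close> by auto
    moreover have "matching E M" using M(1) unfolding maximal_matching_def by blast
    ultimately show False using matching_disjoint \<open>g \<in> M\<close> M(2) by blast
  qed
  then show ?thesis using assms(3) by blast
qed

text \<open>Three pairwise intersecting edges with no common vertex form a triangle.\<close>

lemma strong_clique_line_graph_is_star:
  assumes "simple_graph V E" "triangle_free V E"
    and "strong_clique E (line_graph_edges E) C" "C \<noteq> {}"
  obtains a where "C = star E a"
proof -
  have C: "C \<subseteq> E" "\<And>f g. f \<in> C \<Longrightarrow> g \<in> C \<Longrightarrow> f \<noteq> g \<Longrightarrow> f \<inter> g \<noteq> {}"
    using assms(3) unfolding strong_clique_line_graph_iff by blast+
  obtain e where "e \<in> C" using assms(4) by blast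
  then obtain a b where e: "e = {a, b}" "a \<in> V" "b \<in> V" "a \<noteq> b"
    using simple_graph_edge[OF assms(1)] C(1) by blast
  have "C \<subseteq> star E a \<or> C \<subseteq> star E b"
  proof (rule ccontr)
    assume "\<not> (C \<subseteq> star E a \<or> C \<subseteq> star E b)"
    then have "\<not> C \<subseteq> star E a" "\<not> C \<subseteq> star E b" by simp_all
    then obtain f g where f: "f \<in> C" "a \<notin> f" and g: "g \<in> C" "b \<notin> g"
      using C(1) by (auto simp: subset_iff)
    have "b \<in> f" using C(2)[OF f(1) \<open>e \<in> C\<close>] f(2) e(1) by blast
    have "a \<in> g" using C(2)[OF g(1) \<open>e \<in> C\<close>] g(2) e(1) by blast
    obtain c where c: "c \<in> f" "c \<in> g" using C(2)[OF f(1) g(1)] f(2) \<open>a \<in> g\<close> by blast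
    obtain p q where f_pq: "f = {p, q}" "p \<in> V" "q \<in> V"
      using simple_graph_edge[OF assms(1)] C(1) f(1) by blast
    obtain r s where g_rs: "g = {r, s}" "r \<in> V" "s \<in> V"
      using simple_graph_edge[OF assms(1)] C(1) g(1) by blast
    have "f = {b, c}" "g = {a, c}" "c \<in> V"
      using f_pq g_rs c \<open>b \<in> f\<close> \<open>a \<in> g\<close> f(2) g(2) by auto
    then show False
      using assms(2) e C(1) f(1) g(1) \<open>e \<in> C\<close> unfolding triangle_free_def by blast
  qed
  then show ?thesis using strong_clique_line_graph_star[OF finite_edges_simple_graph[OF assms(1)] assms(3)] that
    by blast
qed

lemma localizable_line_graph_if_strong_stars:
  assumes Z: "bipartite_by Z E"
    and strong: "\<And>z M. z \<in> Z \<Longrightarrow> maximal_matching E M \<Longrightarrow> star E z \<inter> M \<noteq> {}"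
  shows "localizable E (line_graph_edges E)"
  unfolding localizable_def
proof (intro exI[of _ "star E ` Z - {{}}"] conjI ballI impI)
  show "\<Union>(star E ` Z - {{}}) = E"
  proof
    show "E \<subseteq> \<Union>(star E ` Z - {{}})"
    proof
      fix e assume "e \<in> E"
      then obtain a b where "e = {a, b}" "a \<in> Z" by (rule bipartite_byE[OF Z])
      then have "e \<in> star E a" using \<open>e \<in> E\<close> by simp
      then show "e \<in> \<Union>(star E ` Z - {{}})" using \<open>a \<in> Z\<close> by blast
    qed
  qed (auto simp: star_def)
  show "{} \<notin> star E ` Z - {{}}" by blast
next
  fix A B assume "A \<in> star E ` Z - {{}}" "B \<in> star E ` Z - {{}}" "A \<noteq> B"
  then obtain z z' where "z \<in> Z" "z' \<in> Z" "A = star E z" "B = star E z'" "z \<noteq> z'" by blast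
  then show "A \<inter> B = {}" using bipartite_by_unique[OF Z] by fastforce
next
  fix A assume "A \<in> star E ` Z - {{}}"
  then obtain z where "z \<in> Z" "A = star E z" by blast
  then show "strong_clique E (line_graph_edges E) A"
    unfolding strong_clique_line_graph_iff using strong by auto
qed

lemma localizable_line_graph_imp_strong_stars:
  assumes "simple_graph V E" "triangle_free V E" "localizable E (line_graph_edges E)"
  obtains Z where "bipartite_by Z E"
    "\<And>z M. z \<in> Z \<Longrightarrow> maximal_matching E M \<Longrightarrow> star E z \<inter> M \<noteq> {}"
proof -
  obtain P where P: "\<Union>P = E" "{} \<notin> P" "\<forall>A\<in>P. \<forall>B\<in>P. A \<noteq> B \<longrightarrow> A \<inter> B = {}"
    "\<forall>C\<in>P. strong_clique E (line_graph_edges E) C"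
    using assms(3) unfolding localizable_def by blast
  have "\<exists>a. star E a = C" if C: "C \<in> P" for C
  proof -
    have "C \<noteq> {}" using P(2) C by blast
    moreover have "strong_clique E (line_graph_edges E) C" using P(4) C by blast
    ultimately obtain a where "C = star E a"
      using strong_clique_line_graph_is_star[OF assms(1,2)] by blast
    then show ?thesis by blast
  qed
  then obtain centre where centre: "\<And>C. C \<in> P \<Longrightarrow> star E (centre C) = C" by metis
  have "bipartite_by (centre ` P) E" unfolding bipartite_by_def
  proof
    fix e assume "e \<in> E"
    then obtain C where C: "C \<in> P" "e \<in> C" using P(1) by blast
    then have "e \<in> star E (centre C)" using centre by simp
    then have "centre C \<in> e" by simp
    moreover obtain p q where "e = {p, q}" "p \<noteq> q" by (rule simple_graph_edge[OF assms(1) \<open>e \<in> E\<close>])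
    ultimately obtain y where y: "e = {centre C, y}" "y \<noteq> centre C" by (auto simp: doubleton_eq_iff)
    have "y \<notin> centre ` P"
    proof
      assume "y \<in> centre ` P"
      then obtain D where D: "D \<in> P" "y = centre D" by blast
      then have "e \<in> star E (centre D)" using \<open>e \<in> E\<close> y(1) by simp
      then have "e \<in> D" using centre[OF D(1)] by simp
      then have "C = D" using P(3) C D(1) by blast
      then show False using y D(2) by simp
    qed
    then show "\<exists>a b. e = {a, b} \<and> a \<in> centre ` P \<and> b \<notin> centre ` P" using y(1) C(1) by blast
  qed
  moreover have "star E z \<inter> M \<noteq> {}" if "z \<in> centre ` P" "maximal_matching E M" for z M
  proof -
    obtain C where "C \<in> P" "z = centre C" using \<open>z \<in> centre ` P\<close> by blast
    then have "strong_clique E (line_graph_edges E) (star E z)" using centre P(4) by simp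
    then show ?thesis using \<open>maximal_matching E M\<close> unfolding strong_clique_line_graph_iff by blast
  qed
  ultimately show ?thesis using that by blast
qed

lemma card_maximal_matching_eq_if_strong_stars:
  assumes Z: "bipartite_by Z E"
    and strong: "\<And>z M. z \<in> Z \<Longrightarrow> maximal_matching E M \<Longrightarrow> star E z \<inter> M \<noteq> {}"
    and M: "maximal_matching E M"
  shows "card M = card Z"
proof -
  have matching: "matching E M" using M unfolding maximal_matching_def by blast
  define pick where "pick z = (SOME e. e \<in> star E z \<inter> M)" for z
  have pick: "pick z \<in> star E z \<inter> M" if "z \<in> Z" for z
    unfolding pick_def using strong[OF that M] by (metis some_in_eq)
  have "bij_betw pick Z M" unfolding bij_betw_def
  proof
    show "inj_on pick Z"
    proof (rule inj_onI)
      fix z z' assume z: "z \<in> Z" "z' \<in> Z" "pick z = pick z'"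
      then have "z \<in> pick z \<inter> Z" "z' \<in> pick z \<inter> Z" "pick z \<in> E"
        using pick[OF z(1)] pick[OF z(2)] by auto
      then show "z = z'" using bipartite_by_unique[OF Z] by blast
    qed
    show "pick ` Z = M"
    proof
      show "pick ` Z \<subseteq> M" using pick by blast
      show "M \<subseteq> pick ` Z"
      proof
        fix e assume "e \<in> M"
        then have "e \<in> E" using matching_subset_edges[OF matching] by blast
        then obtain a b where "e = {a, b}" "a \<in> Z" by (rule bipartite_byE[OF Z])
        then have "a \<in> e \<inter> pick a" "pick a \<in> M" using pick[OF \<open>a \<in> Z\<close>] by auto
        then have "e = pick a" using matching_disjoint[OF matching \<open>e \<in> M\<close>] by blast
        then show "e \<in> pick ` Z" using \<open>a \<in> Z\<close> by blast
      qed
    qed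
  qed
  then show ?thesis by (simp add: bij_betw_same_card)
qed

theorem mainTheorem18:
  fixes V :: "'a set" and E :: "'a set set"
  assumes "simple_graph V E"
    and "connected_graph V E"
    and "triangle_free V E"
  shows "localizable E (line_graph_edges E) \<longleftrightarrow> bipartite V E \<and> equimatchable E"
proof
  assume "localizable E (line_graph_edges E)"
  then obtain Z where Z: "bipartite_by Z E"
    and strong: "\<And>z M. z \<in> Z \<Longrightarrow> maximal_matching E M \<Longrightarrow> star E z \<inter> M \<noteq> {}"
    using localizable_line_graph_imp_strong_stars[OF assms(1,3)] by blast
  have "equimatchable E"
    unfolding equimatchable_def using card_maximal_matching_eq_if_strong_stars[OF Z strong] by simp
  then show "bipartite V E \<and> equimatchable E"
    using Z bipartite_iff_bipartite_by[OF assms(1)] by blast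
next
  assume "bipartite V E \<and> equimatchable E"
  then obtain X where "bipartite_by X E" "equimatchable E"
    using bipartite_iff_bipartite_by[OF assms(1)] by blast
  then obtain C where "bipartite_by C E"
    "\<And>c M. c \<in> C \<Longrightarrow> maximal_matching E M \<Longrightarrow> star E c \<inter> M \<noteq> {}"
    using strong_stars_if_equimatchable[OF finite_edges_simple_graph[OF assms(1)]] by blast
  then show "localizable E (line_graph_edges E)" by (rule localizable_line_graph_if_strong_stars)
qed

end
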